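(* With $P$ the Pauli tuple and $\overline{P}=(P_1,P_2,-P_3)$, one has $\mathcal W(\overline{P})=-\mathcal W(P)$, equivalently $\mathcal D_{\overline{P}}=-\mathcal D_P$.
   Context: For $A\in SM_d(\mathbb C)^g$ (tuples of self-adjoint $d\times d$ complex matrices), $\mathcal D_A=\bigcup_n\{X\in SM_n(\mathbb C)^g: I-\sum_i A_i\otimes X_i\succeq0\}$. For a tuple $T$ of operators on a Hilbert space $H$, the matrix range is $\mathcal W(T)=\bigcup_n\{\phi(T):\phi:B(H)\to M_n \text{ unital completely positive}\}$, with $\phi(T)=(\phi(T_1),\dots,\phi(T_g))$. For a set $K$ of tuples, $-K=\{-X: X\in K\}$. The Pauli tuple is $P=\left(\begin{bmatrix}1&0\\0&-1\end{bmatrix},\begin{bmatrix}0&1\\1&0\end{bmatrix},\begin{bmatrix}0&i\\-i&0\end{bmatrix}\right)$. *)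

theory Defs
  imports Complex_Main "Jordan_Normal_Form.Matrix"
begin

definition adj :: "complex mat \<Rightarrow> complex mat" where
  "adj A = mat (dim_col A) (dim_row A) (\<lambda>(i,j). cnj (A $$ (j,i)))"

definition selfadj :: "nat \<Rightarrow> complex mat \<Rightarrow> bool" where
  "selfadj n A \<longleftrightarrow> A \<in> carrier_mat n n \<and> adj A = A"

definition psd :: "nat \<Rightarrow> complex mat \<Rightarrow> bool" where
  "psd n A \<longleftrightarrow> selfadj n A \<and>
     (\<forall>v \<in> carrier_vec n.
        let q = (\<Sum>i<n. \<Sum>j<n. cnj (v $ i) * A $$ (i,j) * v $ j) in Im q = 0 \<and> Re q \<ge> 0)"

definition kron :: "complex mat \<Rightarrow> complex mat \<Rightarrow> complex mat" where
  "kron A X = mat (dim_row A * dim_row X) (dim_col A * dim_col X)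
     (\<lambda>(i,j). A $$ (i div dim_row X, j div dim_col X) * X $$ (i mod dim_row X, j mod dim_col X))"

definition tuple_neg :: "complex mat list \<Rightarrow> complex mat list" where
  "tuple_neg X = map (\<lambda>M. - M) X"

definition set_neg :: "complex mat list set \<Rightarrow> complex mat list set" where
  "set_neg K = tuple_neg ` K"

definition free_spec :: "nat \<Rightarrow> complex mat list \<Rightarrow> complex mat list set" where
  "free_spec d A = {X. \<exists>n. length X = length A \<and> (\<forall>Xi \<in> set X. selfadj n Xi) \<and>
      psd (d*n) (1\<^sub>m (d*n) - foldr (+) (map2 kron A X) (0\<^sub>m (d*n) (d*n)))}"

text \<open>k-th ampliation id_{M_k} \<otimes> \<phi> of a map \<phi> : M_d \<rightarrow> M_n,
  acting blockwise on a (k d) x (k d) matrix viewed as a k x k block matrix.\<close>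
definition ampl :: "nat \<Rightarrow> nat \<Rightarrow> nat \<Rightarrow> (complex mat \<Rightarrow> complex mat) \<Rightarrow> complex mat \<Rightarrow> complex mat" where
  "ampl d n k \<phi> X = mat (k*n) (k*n) (\<lambda>(i,j).
     \<phi> (mat d d (\<lambda>(r,s). X $$ ((i div n)*d + r, (j div n)*d + s))) $$ (i mod n, j mod n))"

definition ucp :: "nat \<Rightarrow> nat \<Rightarrow> (complex mat \<Rightarrow> complex mat) \<Rightarrow> bool" where
  "ucp d n \<phi> \<longleftrightarrow>
     (\<forall>X \<in> carrier_mat d d. \<phi> X \<in> carrier_mat n n) \<and>
     (\<forall>X \<in> carrier_mat d d. \<forall>Y \<in> carrier_mat d d. \<phi> (X + Y) = \<phi> X + \<phi> Y) \<and>
     (\<forall>X \<in> carrier_mat d d. \<forall>c::complex. \<phi> (c \<cdot>\<^sub>m X) = c \<cdot>\<^sub>m \<phi> X) \<and>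
     \<phi> (1\<^sub>m d) = 1\<^sub>m n \<and>
     (\<forall>k X. psd (k*d) X \<longrightarrow> psd (k*n) (ampl d n k \<phi> X))"

definition matrix_range :: "nat \<Rightarrow> complex mat list \<Rightarrow> complex mat list set" where
  "matrix_range d T = {map \<phi> T | \<phi> n. ucp d n \<phi>}"

definition pauli :: "complex mat list" where
  "pauli = [mat_of_rows_list 2 [[1, 0], [0, -1]],
            mat_of_rows_list 2 [[0, 1], [1, 0]],
            mat_of_rows_list 2 [[0, \<i>], [-\<i>, 0]]]"

definition pauli_bar :: "complex mat list" where
  "pauli_bar = [pauli ! 0, pauli ! 1, - (pauli ! 2)]"

end

theory Submission
  imports Defs
begin

(* Conjugation by the rotation U = [[0, 1], [-1, 0]] negates P_1 and P_2 and fixes P_3, so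
   U P U^* = -Pbar. Matrix ranges and free spectrahedra are invariant under simultaneous unitary
   conjugation: phi o Ad U is again ucp, and the linear pencil of U P U^* is the conjugate of
   that of P by U (x) I. Both sets turn a sign change of the tuple into a sign change of the
   set (ucp maps are linear; A (x) X is bilinear). Since U is a signed permutation matrix, every
   conjugation involved is a signed reindexing of entries, which preserves positive
   semidefiniteness. *)

definition quad_form :: "nat \<Rightarrow> complex mat \<Rightarrow> complex vec \<Rightarrow> complex" where
  "quad_form m A v = (\<Sum>i<m. \<Sum>j<m. cnj (v $ i) * A $$ (i,j) * v $ j)"

lemma psd_iff_quad_form:
  "psd m A \<longleftrightarrow> selfadj m A \<and>
     (\<forall>v\<in>carrier_vec m. Im (quad_form m A v) = 0 \<and> Re (quad_form m A v) \<ge> 0)"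
  unfolding psd_def quad_form_def Let_def by simp

text \<open>Oriented so that it does not loop as a simp rule.\<close>
lemma selfadj_iff_entries:
  "selfadj m A \<longleftrightarrow> A \<in> carrier_mat m m \<and> (\<forall>i<m. \<forall>j<m. cnj (A $$ (j,i)) = A $$ (i,j))"
  unfolding selfadj_def adj_def by (auto simp: mat_eq_iff)

lemma selfadj_uminus_iff: "selfadj n (- M) \<longleftrightarrow> selfadj n M"
  by (auto simp: selfadj_iff_entries)

text \<open>The congruence \<open>S A S\<^sup>*\<close> by the signed permutation matrix \<open>S\<close> with entries
  \<open>S\<^bsub>i,\<sigma> i\<^esub> = \<epsilon> i\<close>.\<close>
definition signed_perm_congr ::
    "nat \<Rightarrow> (nat \<Rightarrow> nat) \<Rightarrow> (nat \<Rightarrow> complex) \<Rightarrow> complex mat \<Rightarrow> complex mat" where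
  "signed_perm_congr m \<sigma> \<epsilon> A = mat m m (\<lambda>(i,j). \<epsilon> i * \<epsilon> j * A $$ (\<sigma> i, \<sigma> j))"

lemma signed_perm_congr_index [simp]:
  "i < m \<Longrightarrow> j < m \<Longrightarrow> signed_perm_congr m \<sigma> \<epsilon> A $$ (i,j) = \<epsilon> i * \<epsilon> j * A $$ (\<sigma> i, \<sigma> j)"
  "dim_row (signed_perm_congr m \<sigma> \<epsilon> A) = m" "dim_col (signed_perm_congr m \<sigma> \<epsilon> A) = m"
  by (simp_all add: signed_perm_congr_def)

lemma signed_perm_congr_carrier [simp]: "signed_perm_congr m \<sigma> \<epsilon> A \<in> carrier_mat m m"
  by (simp add: carrier_matI)

lemma foldr_add_mat_dims:
  fixes Ms :: "complex mat list"
  shows "dim_row (foldr (+) Ms (0\<^sub>m r c)) = r" "dim_col (foldr (+) Ms (0\<^sub>m r c)) = c"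
  by (induction Ms) simp_all

lemma foldr_add_mat_carrier: "foldr (+) (Ms :: complex mat list) (0\<^sub>m r c) \<in> carrier_mat r c"
  by (rule carrier_matI) (simp_all add: foldr_add_mat_dims)

locale signed_involution =
  fixes m :: nat and \<sigma> :: "nat \<Rightarrow> nat" and \<epsilon> :: "nat \<Rightarrow> complex"
  assumes involution: "\<And>i. i < m \<Longrightarrow> \<sigma> i < m \<and> \<sigma> (\<sigma> i) = i"
    and sign: "\<And>i. \<epsilon> i = 1 \<or> \<epsilon> i = -1"
begin

lemma cnj_sign [simp]: "cnj (\<epsilon> i) = \<epsilon> i"
  using sign[of i] by auto

lemma sign_square [simp]: "\<epsilon> i * \<epsilon> i = 1"
  using sign[of i] by auto

lemma bij_betw_\<sigma>: "bij_betw \<sigma> {..<m} {..<m}"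
  by (rule bij_betw_byWitness[where f' = \<sigma>]) (auto simp: involution)

lemma quad_form_congr:
  "quad_form m (signed_perm_congr m \<sigma> \<epsilon> A) v = quad_form m A (vec m (\<lambda>k. \<epsilon> (\<sigma> k) * v $ \<sigma> k))"
  (is "_ = quad_form m A ?w")
proof -
  have w: "?w $ \<sigma> i = \<epsilon> i * v $ i" if "i < m" for i
    using involution[OF that] by simp
  have "quad_form m (signed_perm_congr m \<sigma> \<epsilon> A) v
      = (\<Sum>i<m. \<Sum>j<m. cnj (?w $ \<sigma> i) * A $$ (\<sigma> i, \<sigma> j) * ?w $ \<sigma> j)"
    unfolding quad_form_def by (intro sum.cong refl) (simp add: w)
  also have "\<dots> = (\<Sum>i<m. \<Sum>j<m. cnj (?w $ \<sigma> i) * A $$ (\<sigma> i, j) * ?w $ j)"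
    by (intro sum.cong refl sum.reindex_bij_betw[OF bij_betw_\<sigma>])
  also have "\<dots> = quad_form m A ?w"
    unfolding quad_form_def
    by (rule sum.reindex_bij_betw[OF bij_betw_\<sigma>, where g = "\<lambda>i. \<Sum>j<m. cnj (?w $ i) * A $$ (i,j) * ?w $ j"])
  finally show ?thesis .
qed

lemma psd_congr:
  assumes "psd m A"
  shows "psd m (signed_perm_congr m \<sigma> \<epsilon> A)"
proof -
  have "cnj (A $$ (\<sigma> j, \<sigma> i)) = A $$ (\<sigma> i, \<sigma> j)" if "i < m" "j < m" for i j
    using assms involution that unfolding psd_iff_quad_form selfadj_iff_entries by blast
  then have "selfadj m (signed_perm_congr m \<sigma> \<epsilon> A)"
    unfolding selfadj_iff_entries by (simp add: mult.commute)
  then show ?thesis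
    using assms by (simp add: psd_iff_quad_form quad_form_congr)
qed

lemma congr_add:
  "N \<in> carrier_mat m m \<Longrightarrow> signed_perm_congr m \<sigma> \<epsilon> (M + N) = signed_perm_congr m \<sigma> \<epsilon> M + signed_perm_congr m \<sigma> \<epsilon> N"
  by (rule eq_matI) (auto simp: involution distrib_left)

lemma congr_diff:
  "N \<in> carrier_mat m m \<Longrightarrow> signed_perm_congr m \<sigma> \<epsilon> (M - N) = signed_perm_congr m \<sigma> \<epsilon> M - signed_perm_congr m \<sigma> \<epsilon> N"
  by (rule eq_matI) (auto simp: involution right_diff_distrib)

lemma inj_\<sigma>: "i < m \<Longrightarrow> j < m \<Longrightarrow> \<sigma> i = \<sigma> j \<longleftrightarrow> i = j"
  by (metis involution)

lemma congr_one: "signed_perm_congr m \<sigma> \<epsilon> (1\<^sub>m m) = 1\<^sub>m m"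
  by (rule eq_matI) (auto simp: involution inj_\<sigma>)

lemma congr_zero: "signed_perm_congr m \<sigma> \<epsilon> (0\<^sub>m m m) = 0\<^sub>m m m"
  by (rule eq_matI) (auto simp: involution)

lemma congr_foldr_add:
  "set Ms \<subseteq> carrier_mat m m \<Longrightarrow>
    signed_perm_congr m \<sigma> \<epsilon> (foldr (+) Ms (0\<^sub>m m m)) = foldr (+) (map (signed_perm_congr m \<sigma> \<epsilon>) Ms) (0\<^sub>m m m)"
proof (induction Ms)
  case Nil
  show ?case by (simp add: congr_zero)
next
  case (Cons M Ms)
  then show ?case
    by (simp add: congr_add foldr_add_mat_carrier)
qed

lemma congr_inverse:
  assumes "A \<in> carrier_mat m m"
  shows "signed_perm_congr m \<sigma> (\<epsilon> \<circ> \<sigma>) (signed_perm_congr m \<sigma> \<epsilon> A) = A"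
proof (rule eq_matI)
  fix i j assume "i < dim_row A" "j < dim_col A"
  then have "i < m" "j < m" using assms by auto
  then show "signed_perm_congr m \<sigma> (\<epsilon> \<circ> \<sigma>) (signed_perm_congr m \<sigma> \<epsilon> A) $$ (i,j) = A $$ (i,j)"
    using involution[of i] involution[of j]
    by (simp add: ac_simps sign_square[of "\<sigma> i"] sign_square[of "\<sigma> j"])
qed (use assms in auto)

lemma psd_congr_iff:
  assumes "A \<in> carrier_mat m m"
  shows "psd m (signed_perm_congr m \<sigma> \<epsilon> A) \<longleftrightarrow> psd m A"
proof
  interpret inverse: signed_involution m \<sigma> "\<epsilon> \<circ> \<sigma>"
    using involution sign by unfold_locales auto
  show "psd m A" if "psd m (signed_perm_congr m \<sigma> \<epsilon> A)"
    using inverse.psd_congr[OF that] by (simp only: congr_inverse[OF assms])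
  show "psd m (signed_perm_congr m \<sigma> \<epsilon> A)" if "psd m A"
    using psd_congr[OF that] .
qed

end

text \<open>\<open>flip2 X = U X U\<^sup>*\<close> for the rotation \<open>U = [[0, 1], [-1, 0]]\<close>.\<close>
definition flip2 :: "complex mat \<Rightarrow> complex mat" where
  "flip2 = signed_perm_congr 2 (\<lambda>r. 1 - r) (\<lambda>r. (-1) ^ r)"

lemma flip2_carrier [simp]: "flip2 X \<in> carrier_mat 2 2"
  by (simp add: flip2_def)

lemma flip2_add:
  "X \<in> carrier_mat 2 2 \<Longrightarrow> Y \<in> carrier_mat 2 2 \<Longrightarrow> flip2 (X + Y) = flip2 X + flip2 Y"
  by (rule eq_matI) (auto simp: flip2_def distrib_left)

lemma flip2_smult: "X \<in> carrier_mat 2 2 \<Longrightarrow> flip2 (c \<cdot>\<^sub>m X) = c \<cdot>\<^sub>m flip2 X"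
  by (rule eq_matI) (auto simp: flip2_def)

lemma flip2_one: "flip2 (1\<^sub>m 2) = 1\<^sub>m 2"
  by (rule eq_matI) (auto simp: flip2_def)

lemma flip2_flip2: "X \<in> carrier_mat 2 2 \<Longrightarrow> flip2 (flip2 X) = X"
  by (rule eq_matI) (auto simp: flip2_def less_2_cases_iff)

definition swap_pairs :: "nat \<Rightarrow> nat" where
  "swap_pairs i = i div 2 * 2 + (1 - i mod 2)"

lemma swap_pairs_block: "r < 2 \<Longrightarrow> swap_pairs (a * 2 + r) = a * 2 + (1 - r)"
  by (auto simp: swap_pairs_def less_2_cases_iff)

lemma swap_pairs_involution: "i < k * 2 \<Longrightarrow> swap_pairs i < k * 2 \<and> swap_pairs (swap_pairs i) = i"
  by (cases "even i") (auto simp: swap_pairs_def elim!: evenE oddE)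

lemma neg_one_power_cases: "(-1 :: complex) ^ i = 1 \<or> (-1 :: complex) ^ i = -1"
  by (cases "even i") simp_all

lemma neg_one_power_block: "(-1 :: complex) ^ (a * 2 + r) = (-1) ^ r"
  by (simp add: power_add power_mult power2_eq_square)

text \<open>\<open>swap_pairs\<close> and the signs \<open>(-1)\<^sup>i\<close> describe \<open>I\<^sub>k \<otimes> U\<close>.\<close>
lemma ampl_comp_flip2:
  "ampl 2 n k (\<phi> \<circ> flip2) X = ampl 2 n k \<phi> (signed_perm_congr (k*2) swap_pairs (\<lambda>i. (-1) ^ i) X)"
proof (rule eq_matI)
  fix i j assume "i < dim_row (ampl 2 n k \<phi> (signed_perm_congr (k*2) swap_pairs (\<lambda>i. (-1) ^ i) X))"
    "j < dim_col (ampl 2 n k \<phi> (signed_perm_congr (k*2) swap_pairs (\<lambda>i. (-1) ^ i) X))"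
  then have ij: "i < k * n" "j < k * n"
    by (simp_all add: ampl_def)
  then have "i div n < k" "j div n < k"
    by (simp_all add: less_mult_imp_div_less)
  then have "flip2 (mat 2 2 (\<lambda>(r,s). X $$ (i div n * 2 + r, j div n * 2 + s)))
    = mat 2 2 (\<lambda>(r,s). signed_perm_congr (k*2) swap_pairs (\<lambda>i. (-1) ^ i) X $$ (i div n * 2 + r, j div n * 2 + s))"
    by (intro eq_matI) (auto simp: flip2_def swap_pairs_block neg_one_power_block)
  then show "ampl 2 n k (\<phi> \<circ> flip2) X $$ (i,j)
    = ampl 2 n k \<phi> (signed_perm_congr (k*2) swap_pairs (\<lambda>i. (-1) ^ i) X) $$ (i,j)"
    using ij by (simp add: ampl_def)
qed (simp_all add: ampl_def)

lemma ucp_comp_flip2: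
  assumes "ucp 2 n \<phi>"
  shows "ucp 2 n (\<phi> \<circ> flip2)"
proof -
  have "psd (k*n) (ampl 2 n k (\<phi> \<circ> flip2) X)" if "psd (k*2) X" for k X
  proof -
    interpret pairs: signed_involution "k*2" swap_pairs "\<lambda>i. (-1) ^ i"
      by unfold_locales (simp_all add: swap_pairs_involution neg_one_power_cases)
    show ?thesis
      using assms pairs.psd_congr[OF that] by (simp add: ampl_comp_flip2 ucp_def)
  qed
  then show ?thesis
    using assms by (simp add: ucp_def flip2_add flip2_smult flip2_one)
qed

lemma matrix_range_map_flip2:
  assumes "set T \<subseteq> carrier_mat 2 2"
  shows "matrix_range 2 (map flip2 T) = matrix_range 2 T"
proof (intro equalityI subsetI)
  fix Y assume "Y \<in> matrix_range 2 (map flip2 T)"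
  then obtain \<phi> n where "Y = map (\<phi> \<circ> flip2) T" "ucp 2 n \<phi>"
    by (auto simp: matrix_range_def)
  then show "Y \<in> matrix_range 2 T"
    unfolding matrix_range_def using ucp_comp_flip2 by blast
next
  fix Y assume "Y \<in> matrix_range 2 T"
  then obtain \<phi> n where "Y = map \<phi> T" "ucp 2 n \<phi>"
    by (auto simp: matrix_range_def)
  moreover have "map \<phi> T = map (\<phi> \<circ> flip2) (map flip2 T)"
    using assms by (auto simp: flip2_flip2)
  ultimately show "Y \<in> matrix_range 2 (map flip2 T)"
    unfolding matrix_range_def using ucp_comp_flip2 by blast
qed

lemma tuple_neg_tuple_neg [simp]: "tuple_neg (tuple_neg X) = X"
  by (simp add: tuple_neg_def comp_def)

lemma mem_set_neg_iff: "X \<in> set_neg K \<longleftrightarrow> tuple_neg X \<in> K"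
  unfolding set_neg_def by (metis image_iff tuple_neg_tuple_neg)

lemma ucp_uminus:
  assumes "ucp d n \<phi>" "M \<in> carrier_mat d d"
  shows "\<phi> (- M) = - \<phi> M"
proof -
  have "- M = (-1) \<cdot>\<^sub>m M" and "- \<phi> M = (-1) \<cdot>\<^sub>m \<phi> M"
    by (auto intro!: eq_matI)
  with assms show ?thesis
    by (simp add: ucp_def)
qed

lemma matrix_range_tuple_neg:
  assumes "set T \<subseteq> carrier_mat d d"
  shows "matrix_range d (tuple_neg T) = set_neg (matrix_range d T)"
proof -
  have "map \<phi> (tuple_neg T) = tuple_neg (map \<phi> T)" if "ucp d n \<phi>" for \<phi> n
    using assms ucp_uminus[OF that] by (auto simp: tuple_neg_def)
  then show ?thesis
    unfolding matrix_range_def set_neg_def by (auto simp: image_iff) metis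
qed

lemma kron_uminus_left: "kron (- A) X = - kron A X"
  by (rule eq_matI) (auto simp: kron_def less_mult_imp_div_less)

lemma kron_uminus_right: "kron A (- X) = - kron A X"
proof (rule eq_matI)
  fix i j assume "i < dim_row (- kron A X)" "j < dim_col (- kron A X)"
  then have "i < dim_row A * dim_row X" "j < dim_col A * dim_col X" "0 < dim_row X" "0 < dim_col X"
    by (auto simp: kron_def intro!: gr0I)
  then show "kron A (- X) $$ (i,j) = (- kron A X) $$ (i,j)"
    by (simp add: kron_def)
qed (simp_all add: kron_def)

lemma kron_carrier: "A \<in> carrier_mat p q \<Longrightarrow> X \<in> carrier_mat r s \<Longrightarrow> kron A X \<in> carrier_mat (p*r) (q*s)"
  unfolding carrier_mat_def kron_def by simp

definition pencil :: "nat \<Rightarrow> nat \<Rightarrow> complex mat list \<Rightarrow> complex mat list \<Rightarrow> complex mat" where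
  "pencil d n A X = 1\<^sub>m (d*n) - foldr (+) (map2 kron A X) (0\<^sub>m (d*n) (d*n))"

lemma free_spec_pencil:
  "free_spec d A = {X. \<exists>n. length X = length A \<and> (\<forall>Xi \<in> set X. selfadj n Xi) \<and> psd (d*n) (pencil d n A X)}"
  by (simp add: free_spec_def pencil_def)

lemma pencil_carrier [simp]: "pencil d n A X \<in> carrier_mat (d*n) (d*n)"
  by (rule carrier_matI) (simp_all add: pencil_def foldr_add_mat_dims)

lemma pencil_tuple_neg: "pencil d n (tuple_neg A) X = pencil d n A (tuple_neg X)"
proof -
  have "map2 kron (tuple_neg A) X = map2 kron A (tuple_neg X)"
    by (induction A X rule: list_induct2') (simp_all add: tuple_neg_def kron_uminus_left kron_uminus_right)
  then show ?thesis
    by (simp add: pencil_def)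
qed

definition swap_halves :: "nat \<Rightarrow> nat \<Rightarrow> nat" where
  "swap_halves n i = (1 - i div n) * n + i mod n"

lemma swap_halves_div_mod:
  assumes "i < 2 * n"
  shows "swap_halves n i div n = 1 - i div n" "swap_halves n i mod n = i mod n"
  using assms by (simp_all add: swap_halves_def)

lemma swap_halves_involution:
  assumes "i < 2 * n"
  shows "swap_halves n i < 2 * n \<and> swap_halves n (swap_halves n i) = i"
proof
  have "i div n < 2" "i mod n < n"
    using assms by (simp_all add: less_mult_imp_div_less mult.commute)
  then show "swap_halves n i < 2 * n"
    by (auto simp: swap_halves_def less_2_cases_iff)
  have "swap_halves n (swap_halves n i) = (1 - (1 - i div n)) * n + i mod n"
    by (simp add: swap_halves_def[of n "swap_halves n i"] swap_halves_div_mod[OF assms])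
  also have "\<dots> = i"
    using \<open>i div n < 2\<close> by (simp add: diff_diff_cancel)
  finally show "swap_halves n (swap_halves n i) = i" .
qed

text \<open>\<open>swap_halves\<close> and the signs \<open>(-1)\<^bsup>i div n\<^esup>\<close> describe \<open>U \<otimes> I\<^sub>n\<close>.\<close>
lemma kron_flip2:
  assumes "a \<in> carrier_mat 2 2" "x \<in> carrier_mat n n"
  shows "kron (flip2 a) x = signed_perm_congr (2*n) (swap_halves n) (\<lambda>i. (-1) ^ (i div n)) (kron a x)"
proof (rule eq_matI)
  fix i j assume "i < dim_row (signed_perm_congr (2*n) (swap_halves n) (\<lambda>i. (-1) ^ (i div n)) (kron a x))"
    "j < dim_col (signed_perm_congr (2*n) (swap_halves n) (\<lambda>i. (-1) ^ (i div n)) (kron a x))"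
  then have ij: "i < 2 * n" "j < 2 * n" by simp_all
  then have "i div n < 2" "j div n < 2"
    by (simp_all add: less_mult_imp_div_less mult.commute)
  then show "kron (flip2 a) x $$ (i,j)
    = signed_perm_congr (2*n) (swap_halves n) (\<lambda>i. (-1) ^ (i div n)) (kron a x) $$ (i,j)"
    using assms ij swap_halves_involution[OF ij(1)] swap_halves_involution[OF ij(2)]
    by (simp add: kron_def flip2_def swap_halves_div_mod)
qed (use assms in \<open>simp_all add: kron_def flip2_def\<close>)

lemma pencil_map_flip2:
  assumes "set A \<subseteq> carrier_mat 2 2" "set X \<subseteq> carrier_mat n n"
  shows "pencil 2 n (map flip2 A) X
    = signed_perm_congr (2*n) (swap_halves n) (\<lambda>i. (-1) ^ (i div n)) (pencil 2 n A X)"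
proof -
  interpret halves: signed_involution "2*n" "swap_halves n" "\<lambda>i. (-1) ^ (i div n)"
    by unfold_locales (simp_all add: swap_halves_involution neg_one_power_cases)
  have "map2 kron (map flip2 A) X
      = map (signed_perm_congr (2*n) (swap_halves n) (\<lambda>i. (-1) ^ (i div n))) (map2 kron A X)"
    using assms by (induction A X rule: list_induct2') (auto simp: kron_flip2)
  moreover have "set (map2 kron A X) \<subseteq> carrier_mat (2*n) (2*n)"
    using assms by (auto elim!: in_set_zipE intro!: kron_carrier)
  ultimately show ?thesis
    by (simp add: pencil_def halves.congr_foldr_add halves.congr_diff halves.congr_one
        foldr_add_mat_carrier)
qed

lemma free_spec_map_flip2:
  assumes "set A \<subseteq> carrier_mat 2 2"
  shows "free_spec 2 (map flip2 A) = free_spec 2 A"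
proof -
  have psd_iff: "psd (2*n) (pencil 2 n (map flip2 A) X) \<longleftrightarrow> psd (2*n) (pencil 2 n A X)"
    if "\<forall>Xi \<in> set X. selfadj n Xi" for n X
  proof -
    interpret halves: signed_involution "2*n" "swap_halves n" "\<lambda>i. (-1) ^ (i div n)"
      by unfold_locales (simp_all add: swap_halves_involution neg_one_power_cases)
    have "set X \<subseteq> carrier_mat n n"
      using that by (auto simp: selfadj_def)
    then show ?thesis
      using halves.psd_congr_iff pencil_map_flip2[OF assms] by simp
  qed
  show ?thesis
    unfolding free_spec_pencil length_map using psd_iff by blast
qed

lemma free_spec_tuple_neg: "free_spec d (tuple_neg A) = set_neg (free_spec d A)"
proof -
  have "X \<in> free_spec d (tuple_neg A) \<longleftrightarrow> tuple_neg X \<in> free_spec d A" for X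
    by (simp add: free_spec_pencil pencil_tuple_neg) (simp add: tuple_neg_def selfadj_uminus_iff)
  then show ?thesis
    by (simp add: set_eq_iff mem_set_neg_iff)
qed

lemma pauli_carrier: "set pauli \<subseteq> carrier_mat 2 2"
  by (simp add: pauli_def mat_of_rows_list_def numeral_2_eq_2)

lemma flip2_mat_of_rows_list:
  "flip2 (mat_of_rows_list 2 [[a, b], [c, d]]) = mat_of_rows_list 2 [[d, -c], [-b, a]]"
  by (rule eq_matI) (auto simp: flip2_def mat_of_rows_list_def numeral_2_eq_2 less_Suc_eq)

lemma uminus_mat_of_rows_list:
  "- mat_of_rows_list 2 [[a, b], [c, d]] = mat_of_rows_list 2 [[-a, -b], [-c, -d :: 'a :: group_add]]"
  by (rule eq_matI) (auto simp: mat_of_rows_list_def numeral_2_eq_2 less_Suc_eq)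

lemma pauli_bar_eq: "pauli_bar = tuple_neg (map flip2 pauli)"
  by (simp add: pauli_bar_def pauli_def tuple_neg_def flip2_mat_of_rows_list uminus_mat_of_rows_list)

theorem mainTheorem2:
  shows "matrix_range 2 pauli_bar = set_neg (matrix_range 2 pauli)
       \<and> free_spec 2 pauli_bar = set_neg (free_spec 2 pauli)"
proof
  have flipped_carrier: "set (map flip2 pauli) \<subseteq> carrier_mat 2 2"
    by auto
  show "matrix_range 2 pauli_bar = set_neg (matrix_range 2 pauli)"
    unfolding pauli_bar_eq matrix_range_tuple_neg[OF flipped_carrier]
      matrix_range_map_flip2[OF pauli_carrier] ..
  show "free_spec 2 pauli_bar = set_neg (free_spec 2 pauli)"
    unfolding pauli_bar_eq free_spec_tuple_neg free_spec_map_flip2[OF pauli_carrier] ..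
qed

end
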